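(* Let $(X,\mathcal A,\mathfrak m)$ be a probability space. Then $\|\cdot\|_{0^+}$ and $\|\cdot\|_{0^-}$ are hyperbolic norms on ${\sf L}(X)$, and $$\int fg\,d\mathfrak m\ge\|f\|_{0^+}\|g\|_{0^-}\qquad\forall f,g\in{\sf L}(X),$$ $$\|f\|_{0^\pm}=\inf\Big\{\int fg\,d\mathfrak m:\ g\in{\sf L}(X),\ \|g\|_{0^\mp}\ge1\Big\}\qquad\forall f\in{\sf L}(X),$$ $$\|f\|_{0^\pm}=\frac{1}{\|1/f\|_{0^\mp}}\qquad\forall f\in{\sf L}(X).$$
   Context: ${\sf L}(X)$ is the set of $\mathcal A$-measurable functions $X\to[0,+\infty]$ modulo $\mathfrak m$-a.e. equality, with pointwise sum and multiplication by nonnegative scalars (a prewedge). Conventions: $0\cdot(+\infty)=0$, $\log 0=-\infty$, $\log(+\infty)=+\infty$, $\exp(-\infty)=0$, $\exp(+\infty)=+\infty$, $1/0=+\infty$, $1/(+\infty)=0$. For measurable $\varphi:X\to[-\infty,+\infty]$, $\int\varphi\,d\mathfrak m$ is well defined when at most one of $\int\varphi^+d\mathfrak m$, $\int\varphi^-d\mathfrak m$ is $+\infty$; $\int_+\varphi\,d\mathfrak m$ equals $\int\varphi\,d\mathfrak m$ if well defined and $+\infty$ otherwise, $\int_-\varphi\,d\mathfrak m$ equals $\int\varphi\,d\mathfrak m$ if well defined and $-\infty$ otherwise. Define $\|f\|_{0^+}:=\exp(\int_+\log f\,d\mathfrak m)$ and $\|f\|_{0^-}:=\exp(\int_-\log f\,d\mathfrak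 m)$. A hyperbolic norm on a prewedge $W$ is a map ${\sf hn}:W\to[0,\infty]$ with ${\sf hn}(0)=0$ and ${\sf hn}(\lambda_1v_1+\lambda_2v_2)\ge\lambda_1{\sf hn}(v_1)+\lambda_2{\sf hn}(v_2)$ for all $\lambda_i\in[0,\infty)$. *)

theory Defs
  imports "HOL-Probability.Probability"
begin

definition elog :: "ennreal \<Rightarrow> ereal" where
  "elog t = (if t = 0 then -\<infinity> else if t = \<top> then \<infinity> else ereal (ln (enn2real t)))"

definition eexp :: "ereal \<Rightarrow> ennreal" where
  "eexp s = (case s of ereal r \<Rightarrow> ennreal (exp r) | PInfty \<Rightarrow> \<top> | MInfty \<Rightarrow> 0)"

definition int_pos :: "'a measure \<Rightarrow> ('a \<Rightarrow> ereal) \<Rightarrow> ennreal" where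
  "int_pos M \<phi> = (\<integral>\<^sup>+ x. e2ennreal (max 0 (\<phi> x)) \<partial>M)"

definition int_neg :: "'a measure \<Rightarrow> ('a \<Rightarrow> ereal) \<Rightarrow> ennreal" where
  "int_neg M \<phi> = (\<integral>\<^sup>+ x. e2ennreal (max 0 (- \<phi> x)) \<partial>M)"

definition int_upper :: "'a measure \<Rightarrow> ('a \<Rightarrow> ereal) \<Rightarrow> ereal" where
  "int_upper M \<phi> = (if int_pos M \<phi> = \<top> \<and> int_neg M \<phi> = \<top> then \<infinity>
                     else enn2ereal (int_pos M \<phi>) - enn2ereal (int_neg M \<phi>))"

definition int_lower :: "'a measure \<Rightarrow> ('a \<Rightarrow> ereal) \<Rightarrow> ereal" where
  "int_lower M \<phi> = (if int_pos M \<phi> = \<top> \<and> int_neg M \<phi> = \<top> then -\<infinity>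
                     else enn2ereal (int_pos M \<phi>) - enn2ereal (int_neg M \<phi>))"

definition norm_0p :: "'a measure \<Rightarrow> ('a \<Rightarrow> ennreal) \<Rightarrow> ennreal" where
  "norm_0p M f = eexp (int_upper M (\<lambda>x. elog (f x)))"

definition norm_0m :: "'a measure \<Rightarrow> ('a \<Rightarrow> ennreal) \<Rightarrow> ennreal" where
  "norm_0m M f = eexp (int_lower M (\<lambda>x. elog (f x)))"

(* hyperbolic norm on the prewedge L(X): elements of L(X) are represented by
   measurable functions X \<rightarrow> [0,+\<infinity>]; the map must respect a.e. equality
   (so that it is a map on the quotient), vanish at 0 and be superadditive
   w.r.t. nonnegative (finite) scalars. *)
definition hyperbolic_norm_L :: "'a measure \<Rightarrow> (('a \<Rightarrow> ennreal) \<Rightarrow> ennreal) \<Rightarrow> bool" where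
  "hyperbolic_norm_L M hn \<longleftrightarrow>
     (\<forall>f\<in>borel_measurable M. \<forall>g\<in>borel_measurable M.
        (AE x in M. f x = g x) \<longrightarrow> hn f = hn g) \<and>
     hn (\<lambda>x. 0) = 0 \<and>
     (\<forall>f\<in>borel_measurable M. \<forall>g\<in>borel_measurable M. \<forall>l1 l2 :: real.
        0 \<le> l1 \<longrightarrow> 0 \<le> l2 \<longrightarrow>
        hn (\<lambda>x. ennreal l1 * f x + ennreal l2 * g x) \<ge> ennreal l1 * hn f + ennreal l2 * hn g)"

end

theory Submission
  imports Defs
begin

text \<open>
  Write \<open>\<integral> log f\<close> as \<open>P f - N f\<close>, where \<open>P f\<close> and \<open>N f\<close> integrate the positive and negative
  parts of \<open>log f\<close>; then \<open>\<parallel>f\<parallel>\<^sub>0\<^sub>\<plusminus> = exp (P f - N f)\<close>, the two norms differing only in how they read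
  \<open>\<infinity> - \<infinity>\<close>. Inversion swaps \<open>P\<close> and \<open>N\<close>, whence \<open>\<parallel>1/f\<parallel>\<^sub>0\<^sub>\<mp> = 1 / \<parallel>f\<parallel>\<^sub>0\<^sub>\<plusminus>\<close>, and on a probability
  space both norms are positively homogeneous. Integrating \<open>log s + log t - a \<le> s t e\<^sup>-\<^sup>a - 1\<close> with
  \<open>a = log (\<parallel>f\<parallel>\<^sub>0\<^sub>+ \<parallel>g\<parallel>\<^sub>0\<^sub>-)\<close> gives the reverse Hoelder inequality, and \<open>g = c/f\<close> with \<open>c > \<parallel>f\<parallel>\<close> comes
  arbitrarily close to equality. So each norm is an infimum of the positive linear functionals
  \<open>f \<mapsto> \<integral> f g\<close>, which makes it superadditive, i.e.\ a hyperbolic norm.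
\<close>

definition elog_pos :: "ennreal \<Rightarrow> ennreal" where
  "elog_pos t = e2ennreal (max 0 (elog t))"

definition elog_neg :: "ennreal \<Rightarrow> ennreal" where
  "elog_neg t = e2ennreal (max 0 (- elog t))"

definition int_elog_pos :: "'a measure \<Rightarrow> ('a \<Rightarrow> ennreal) \<Rightarrow> ennreal" where
  "int_elog_pos M f = (\<integral>\<^sup>+ x. elog_pos (f x) \<partial>M)"

definition int_elog_neg :: "'a measure \<Rightarrow> ('a \<Rightarrow> ennreal) \<Rightarrow> ennreal" where
  "int_elog_neg M f = (\<integral>\<^sup>+ x. elog_neg (f x) \<partial>M)"

lemma ennreal_zero_top_pos_cases [case_names zero top pos]:
  fixes t :: ennreal
  obtains "t = 0" | "t = \<top>" | r where "0 < r" "t = ennreal r"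
  by (cases t) (auto simp: less_le)

lemma elog_pos_zero [simp]: "elog_pos 0 = 0"
  by (simp add: elog_pos_def elog_def e2ennreal_neg)

lemma elog_neg_zero [simp]: "elog_neg 0 = \<top>"
  by (simp add: elog_neg_def elog_def)

lemma elog_pos_top [simp]: "elog_pos \<top> = \<top>"
  by (simp add: elog_pos_def elog_def)

lemma elog_neg_top [simp]: "elog_neg \<top> = 0"
  by (simp add: elog_neg_def elog_def e2ennreal_neg)

lemma elog_pos_ennreal: "0 < r \<Longrightarrow> elog_pos (ennreal r) = ennreal (max 0 (ln r))"
  by (simp add: elog_pos_def elog_def max_def)

lemma elog_neg_ennreal: "0 < r \<Longrightarrow> elog_neg (ennreal r) = ennreal (max 0 (- ln r))"
  by (simp add: elog_neg_def elog_def max_def)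

lemma elog_pos_one [simp]: "elog_pos 1 = 0" and elog_neg_one [simp]: "elog_neg 1 = 0"
  using elog_pos_ennreal[of 1] elog_neg_ennreal[of 1] by simp_all

lemma measurable_elog [measurable]: "elog \<in> borel_measurable borel"
  unfolding elog_def by measurable

lemma measurable_elog_pos [measurable]: "elog_pos \<in> borel_measurable borel"
  unfolding elog_pos_def by measurable

lemma measurable_elog_neg [measurable]: "elog_neg \<in> borel_measurable borel"
  unfolding elog_neg_def by measurable

lemma elog_inverse: "elog (1 / t) = - elog t"
proof (cases t rule: ennreal_zero_top_pos_cases)
  case (pos r)
  then have "1 / t = ennreal (1 / r)"
    using divide_ennreal[of 1 r] by simp
  with pos show ?thesis
    by (simp add: elog_def ln_div)
qed (simp_all add: elog_def)

lemma elog_pos_inverse [simp]: "elog_pos (1 / t) = elog_neg t"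
  and elog_neg_inverse [simp]: "elog_neg (1 / t) = elog_pos t"
  by (simp_all add: elog_pos_def elog_neg_def elog_inverse)

lemma norm_0p_eq:
  "norm_0p M f = (if int_elog_pos M f = \<top> then \<top> else if int_elog_neg M f = \<top> then 0
     else ennreal (exp (enn2real (int_elog_pos M f) - enn2real (int_elog_neg M f))))"
  unfolding norm_0p_def int_upper_def int_pos_def int_neg_def
    int_elog_pos_def[symmetric, unfolded elog_pos_def] int_elog_neg_def[symmetric, unfolded elog_neg_def]
  by (cases "int_elog_pos M f"; cases "int_elog_neg M f") (auto simp: ennreal_minus eexp_def)

lemma norm_0m_eq:
  "norm_0m M f = (if int_elog_neg M f = \<top> then 0 else if int_elog_pos M f = \<top> then \<top>
     else ennreal (exp (enn2real (int_elog_pos M f) - enn2real (int_elog_neg M f))))"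
  unfolding norm_0m_def int_lower_def int_pos_def int_neg_def
    int_elog_pos_def[symmetric, unfolded elog_pos_def] int_elog_neg_def[symmetric, unfolded elog_neg_def]
  by (cases "int_elog_pos M f"; cases "int_elog_neg M f") (auto simp: ennreal_minus eexp_def)

lemma inverse_ennreal_exp: "1 / ennreal (exp a) = ennreal (exp (- a))"
  using divide_ennreal[of 1 "exp a"] by (simp add: exp_minus field_simps)

lemma norm_0p_inverse: "norm_0p M (\<lambda>x. 1 / f x) = 1 / norm_0m M f"
  and norm_0m_inverse: "norm_0m M (\<lambda>x. 1 / f x) = 1 / norm_0p M f"
  by (auto simp: norm_0p_eq norm_0m_eq int_elog_pos_def int_elog_neg_def inverse_ennreal_exp
      ennreal_top_divide)

(* Merges a sum of ennreal values into one real sum; use it with ennreal_plus deleted from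
   the simpset, since that rule splits such sums again and the two would loop. *)

lemma ennreal_plus_max_0: "ennreal a + ennreal b = ennreal (max 0 a + max 0 b)"
  by (metis ennreal_max_0 ennreal_plus max.cobounded1)

lemma elog_pos_mult_le:
  assumes "0 < c"
  shows "elog_pos (ennreal c * t) \<le> elog_pos t + ennreal (ln c)"
proof (cases t rule: ennreal_zero_top_pos_cases)
  case (pos r)
  then have "ennreal c * t = ennreal (c * r)" "0 < c * r"
    using assms by (simp_all add: ennreal_mult)
  moreover have "max 0 (ln c + ln r) \<le> max 0 (ln r) + max 0 (ln c)"
    by (simp add: max_def)
  ultimately show ?thesis
    using assms pos
    by (simp add: elog_pos_ennreal ln_mult ennreal_plus_max_0 ennreal_leI del: ennreal_max_0 ennreal_plus)
qed (use assms in \<open>simp_all add: ennreal_mult_top\<close>)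

lemma elog_neg_mult_le:
  assumes "0 < c"
  shows "elog_neg (ennreal c * t) \<le> elog_neg t + ennreal (- ln c)"
proof (cases t rule: ennreal_zero_top_pos_cases)
  case (pos r)
  then have "ennreal c * t = ennreal (c * r)" "0 < c * r"
    using assms by (simp_all add: ennreal_mult)
  moreover have "max 0 (- ln c - ln r) \<le> max 0 (- ln r) + max 0 (- ln c)"
    by (simp add: max_def)
  ultimately show ?thesis
    using assms pos
    by (simp add: elog_neg_ennreal ln_mult ennreal_plus_max_0 ennreal_leI del: ennreal_max_0 ennreal_plus)
qed (use assms in \<open>simp_all add: ennreal_mult_top\<close>)

lemma elog_parts_mult:
  assumes "0 < c"
  shows "elog_pos (ennreal c * t) + elog_neg t + ennreal (- ln c)
       = elog_neg (ennreal c * t) + elog_pos t + ennreal (ln c)"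
proof (cases t rule: ennreal_zero_top_pos_cases)
  case (pos r)
  then have "ennreal c * t = ennreal (c * r)" "0 < c * r"
    using assms by (simp_all add: ennreal_mult)
  moreover have "max 0 (ln c + ln r) + max 0 (- ln r) + max 0 (- ln c)
      = max 0 (- ln c - ln r) + max 0 (ln r) + max 0 (ln c)"
    by (simp add: max_def)
  ultimately show ?thesis
    using assms pos
    by (simp add: elog_pos_ennreal elog_neg_ennreal ln_mult ennreal_plus_max_0
        del: ennreal_max_0 ennreal_plus)
qed (use assms in \<open>simp_all add: ennreal_mult_top\<close>)

lemma elog_pos_le_mult_plus_elog_neg: "elog_pos s \<le> s * t + elog_neg t"
proof (cases s rule: ennreal_zero_top_pos_cases)
  case s: (pos r)
  show ?thesis
  proof (cases t rule: ennreal_zero_top_pos_cases)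
    case t: (pos q)
    have "ln r + ln q \<le> r * q - 1"
      using ln_le_minus_one[of "r * q"] s t by (simp add: ln_mult)
    then have "max 0 (ln r) \<le> r * q + max 0 (- ln q)"
      using mult_pos_pos[OF s(1) t(1)] by (smt (verit))
    with s t show ?thesis
      by (simp add: elog_pos_ennreal elog_neg_ennreal ennreal_mult[symmetric] ennreal_plus_max_0
          ennreal_leI del: ennreal_max_0 ennreal_plus)
  qed (use s in \<open>simp_all add: ennreal_mult_top\<close>)
qed (auto simp: ennreal_top_mult)

text \<open>
  The inequality \<open>ln (s t e\<^sup>-\<^sup>a) \<le> s t e\<^sup>-\<^sup>a - 1\<close>, with every logarithm split into its positive and
  negative parts so that no \<open>\<infinity> - \<infinity>\<close> can arise.
\<close>

lemma elog_parts_young: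
  "elog_pos s + elog_pos t + ennreal (1 - a)
     \<le> elog_neg s + elog_neg t + s * t * ennreal (exp (- a)) + ennreal (a - 1)"
proof (cases s rule: ennreal_zero_top_pos_cases)
  case s: (pos r)
  show ?thesis
  proof (cases t rule: ennreal_zero_top_pos_cases)
    case t: (pos q)
    have "ln r + ln q - a \<le> r * q * exp (- a) - 1"
      using ln_le_minus_one[of "r * q * exp (- a)"] s t by (simp add: ln_mult)
    then have "max 0 (ln r) + max 0 (ln q) + max 0 (1 - a)
        \<le> max 0 (- ln r) + max 0 (- ln q) + r * q * exp (- a) + max 0 (a - 1)"
      using mult_pos_pos[OF s(1) t(1)] by (smt (verit))
    with s t show ?thesis
      by (simp add: elog_pos_ennreal elog_neg_ennreal ennreal_mult[symmetric] ennreal_plus_max_0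
          ennreal_leI del: ennreal_max_0 ennreal_plus)
  qed (use s in \<open>simp_all add: ennreal_mult_top ennreal_top_mult\<close>)
qed (auto simp: ennreal_top_mult)

lemma mult_mult_inverse_le: "t * (c * (1 / t)) \<le> (c :: ennreal)"
  by (cases t rule: ennreal_zero_top_pos_cases)
    (simp_all add: ennreal_times_divide mult.commute[of _ c] mult_divide_eq_ennreal)

lemma ennreal_INF_eqI:
  fixes a :: ennreal
  assumes lower: "\<And>g. g \<in> S \<Longrightarrow> a \<le> \<phi> g"
    and approx: "\<And>c. a < ennreal c \<Longrightarrow> \<exists>g\<in>S. \<phi> g \<le> ennreal c"
  shows "a = (INF g\<in>S. \<phi> g)"
proof (rule antisym)
  show "a \<le> (INF g\<in>S. \<phi> g)"
    using lower by (rule INF_greatest)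
  show "(INF g\<in>S. \<phi> g) \<le> a"
  proof (rule dense_ge)
    fix y assume "a < y"
    then show "(INF g\<in>S. \<phi> g) \<le> y"
      using approx by (cases y) (auto intro: INF_lower2)
  qed
qed

lemma one_le_mult_inverse:
  assumes "0 < c" "a \<le> ennreal c"
  shows "1 \<le> ennreal c * (1 / a)"
proof (cases "a = 0")
  case False
  with assms have "a \<noteq> \<top>"
    by (auto simp: top_unique)
  with False have "1 = a / a"
    by (simp add: less_top)
  also have "\<dots> \<le> ennreal c * (1 / a)"
    using assms(2) by (simp add: ennreal_times_divide divide_right_mono_ennreal)
  finally show ?thesis .
qed (use assms in \<open>simp add: ennreal_mult_top\<close>)

lemma hyperbolic_norm_L_INF:
  assumes INF: "\<And>f. f \<in> borel_measurable M \<Longrightarrow> hn f = (INF g\<in>S. \<integral>\<^sup>+ x. f x * g x \<partial>M)"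
    and S: "S \<subseteq> borel_measurable M" "S \<noteq> {}"
  shows "hyperbolic_norm_L M hn"
  unfolding hyperbolic_norm_L_def
proof (intro conjI ballI allI impI)
  fix f f' :: "'a \<Rightarrow> ennreal"
  assume f: "f \<in> borel_measurable M" and f': "f' \<in> borel_measurable M"
    and "AE x in M. f x = f' x"
  then have "(\<integral>\<^sup>+ x. f x * g x \<partial>M) = (\<integral>\<^sup>+ x. f' x * g x \<partial>M)" for g
    by (intro nn_integral_cong_AE) (auto elim!: eventually_mono)
  then show "hn f = hn f'"
    by (simp add: INF[OF f] INF[OF f'])
next
  show "hn (\<lambda>x. 0) = 0"
    using S(2) by (simp add: INF)
next
  fix f f' :: "'a \<Rightarrow> ennreal" and l1 l2 :: real
  assume f: "f \<in> borel_measurable M" and f': "f' \<in> borel_measurable M"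
  then have lin: "(\<lambda>x. ennreal l1 * f x + ennreal l2 * f' x) \<in> borel_measurable M"
    by measurable
  show "ennreal l1 * hn f + ennreal l2 * hn f' \<le> hn (\<lambda>x. ennreal l1 * f x + ennreal l2 * f' x)"
    unfolding INF[OF f] INF[OF f'] INF[OF lin]
  proof (rule INF_greatest)
    fix g assume "g \<in> S"
    then have g: "g \<in> borel_measurable M"
      using S(1) by auto
    have "ennreal l1 * (INF g\<in>S. \<integral>\<^sup>+ x. f x * g x \<partial>M) + ennreal l2 * (INF g\<in>S. \<integral>\<^sup>+ x. f' x * g x \<partial>M)
        \<le> ennreal l1 * (\<integral>\<^sup>+ x. f x * g x \<partial>M) + ennreal l2 * (\<integral>\<^sup>+ x. f' x * g x \<partial>M)"
      using \<open>g \<in> S\<close> by (intro add_mono mult_left_mono INF_lower) auto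
    also have "\<dots> = (\<integral>\<^sup>+ x. (ennreal l1 * f x + ennreal l2 * f' x) * g x \<partial>M)"
      using f f' g by (simp add: nn_integral_add nn_integral_cmult distrib_right mult.assoc)
    finally show "ennreal l1 * (INF g\<in>S. \<integral>\<^sup>+ x. f x * g x \<partial>M)
        + ennreal l2 * (INF g\<in>S. \<integral>\<^sup>+ x. f' x * g x \<partial>M)
        \<le> (\<integral>\<^sup>+ x. (ennreal l1 * f x + ennreal l2 * f' x) * g x \<partial>M)" .
  qed
qed

lemma int_elog_pos_le_nn_integral_mult:
  assumes "f \<in> borel_measurable M" "g \<in> borel_measurable M"
  shows "int_elog_pos M f \<le> (\<integral>\<^sup>+ x. f x * g x \<partial>M) + int_elog_neg M g"
proof -
  have "int_elog_pos M f \<le> (\<integral>\<^sup>+ x. f x * g x + elog_neg (g x) \<partial>M)"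
    unfolding int_elog_pos_def by (intro nn_integral_mono elog_pos_le_mult_plus_elog_neg)
  also have "\<dots> = (\<integral>\<^sup>+ x. f x * g x \<partial>M) + int_elog_neg M g"
    using assms by (simp add: int_elog_neg_def nn_integral_add)
  finally show ?thesis .
qed

context prob_space
begin

lemma int_elog_pos_mult_le:
  assumes "f \<in> borel_measurable M" "0 < c"
  shows "int_elog_pos M (\<lambda>x. ennreal c * f x) \<le> int_elog_pos M f + ennreal (ln c)"
proof -
  have "int_elog_pos M (\<lambda>x. ennreal c * f x) \<le> (\<integral>\<^sup>+ x. elog_pos (f x) + ennreal (ln c) \<partial>M)"
    unfolding int_elog_pos_def using assms(2) by (intro nn_integral_mono elog_pos_mult_le)
  also have "\<dots> = int_elog_pos M f + ennreal (ln c)"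
    using assms(1) by (simp add: int_elog_pos_def nn_integral_add emeasure_space_1)
  finally show ?thesis .
qed

lemma int_elog_neg_mult_le:
  assumes "f \<in> borel_measurable M" "0 < c"
  shows "int_elog_neg M (\<lambda>x. ennreal c * f x) \<le> int_elog_neg M f + ennreal (- ln c)"
proof -
  have "int_elog_neg M (\<lambda>x. ennreal c * f x) \<le> (\<integral>\<^sup>+ x. elog_neg (f x) + ennreal (- ln c) \<partial>M)"
    unfolding int_elog_neg_def using assms(2) by (intro nn_integral_mono elog_neg_mult_le)
  also have "\<dots> = int_elog_neg M f + ennreal (- ln c)"
    using assms(1) by (simp add: int_elog_neg_def nn_integral_add emeasure_space_1)
  finally show ?thesis .
qed

lemma int_elog_mult_eq_top_iff:
  assumes "f \<in> borel_measurable M" "0 < c"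
  shows "int_elog_pos M (\<lambda>x. ennreal c * f x) = \<top> \<longleftrightarrow> int_elog_pos M f = \<top>"
    and "int_elog_neg M (\<lambda>x. ennreal c * f x) = \<top> \<longleftrightarrow> int_elog_neg M f = \<top>"
proof -
  let ?cf = "\<lambda>x. ennreal c * f x"
  have cf: "?cf \<in> borel_measurable M" and "0 < 1 / c"
    using assms by simp_all
  moreover have "f = (\<lambda>x. ennreal (1 / c) * ?cf x)"
    using assms(2) by (simp add: mult.assoc[symmetric] ennreal_mult[symmetric])
  ultimately have "int_elog_pos M f \<le> int_elog_pos M ?cf + ennreal (ln (1 / c))"
    and "int_elog_neg M f \<le> int_elog_neg M ?cf + ennreal (- ln (1 / c))"
    by (metis int_elog_pos_mult_le int_elog_neg_mult_le)+
  with int_elog_pos_mult_le[OF assms] int_elog_neg_mult_le[OF assms]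
  show "int_elog_pos M ?cf = \<top> \<longleftrightarrow> int_elog_pos M f = \<top>"
    and "int_elog_neg M ?cf = \<top> \<longleftrightarrow> int_elog_neg M f = \<top>"
    by (auto simp: top_unique ennreal_add_eq_top)
qed

lemma int_elog_parts_mult:
  assumes "f \<in> borel_measurable M" "0 < c"
  shows "int_elog_pos M (\<lambda>x. ennreal c * f x) + int_elog_neg M f + ennreal (- ln c)
       = int_elog_neg M (\<lambda>x. ennreal c * f x) + int_elog_pos M f + ennreal (ln c)"
proof -
  have "(\<integral>\<^sup>+ x. elog_pos (ennreal c * f x) + elog_neg (f x) + ennreal (- ln c) \<partial>M)
      = (\<integral>\<^sup>+ x. elog_neg (ennreal c * f x) + elog_pos (f x) + ennreal (ln c) \<partial>M)"
    using elog_parts_mult[OF assms(2)] by simp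
  with assms(1) show ?thesis
    by (simp add: int_elog_pos_def int_elog_neg_def nn_integral_add emeasure_space_1)
qed

lemma int_elog_diff_mult:
  assumes "f \<in> borel_measurable M" "0 < c"
    and "int_elog_pos M f \<noteq> \<top>" "int_elog_neg M f \<noteq> \<top>"
  shows "enn2real (int_elog_pos M (\<lambda>x. ennreal c * f x)) - enn2real (int_elog_neg M (\<lambda>x. ennreal c * f x))
       = ln c + (enn2real (int_elog_pos M f) - enn2real (int_elog_neg M f))"
proof -
  have "int_elog_pos M (\<lambda>x. ennreal c * f x) \<noteq> \<top>" "int_elog_neg M (\<lambda>x. ennreal c * f x) \<noteq> \<top>"
    using assms int_elog_mult_eq_top_iff by blast+
  then have "enn2real (int_elog_pos M (\<lambda>x. ennreal c * f x)) + enn2real (int_elog_neg M f)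
        + enn2real (ennreal (- ln c))
      = enn2real (int_elog_neg M (\<lambda>x. ennreal c * f x)) + enn2real (int_elog_pos M f)
        + enn2real (ennreal (ln c))"
    using arg_cong[OF int_elog_parts_mult[OF assms(1,2)], of enn2real] assms(3,4)
    by (simp add: enn2real_plus less_top)
  moreover have "enn2real (ennreal (ln c)) - enn2real (ennreal (- ln c)) = ln c"
    by (cases "0 \<le> ln c") (simp_all add: ennreal_neg)
  ultimately show ?thesis
    by linarith
qed

lemma norm_0p_mult:
  assumes "f \<in> borel_measurable M" "0 < c"
  shows "norm_0p M (\<lambda>x. ennreal c * f x) = ennreal c * norm_0p M f"
  using assms
  by (simp add: norm_0p_eq int_elog_mult_eq_top_iff int_elog_diff_mult exp_add ennreal_mult
      ennreal_mult_top)

lemma norm_0m_mult: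
  assumes "f \<in> borel_measurable M" "0 < c"
  shows "norm_0m M (\<lambda>x. ennreal c * f x) = ennreal c * norm_0m M f"
  using assms
  by (simp add: norm_0m_eq int_elog_mult_eq_top_iff int_elog_diff_mult exp_add ennreal_mult
      ennreal_mult_top)

lemma norm_0p_mult_norm_0m_le_finite:
  assumes f: "f \<in> borel_measurable M" and g: "g \<in> borel_measurable M"
    and "int_elog_pos M f \<noteq> \<top>" "int_elog_neg M f \<noteq> \<top>"
      "int_elog_pos M g \<noteq> \<top>" "int_elog_neg M g \<noteq> \<top>" "(\<integral>\<^sup>+ x. f x * g x \<partial>M) \<noteq> \<top>"
  shows "norm_0p M f * norm_0m M g \<le> (\<integral>\<^sup>+ x. f x * g x \<partial>M)"
proof -
  define pf nf pg ng i where "pf = enn2real (int_elog_pos M f)" "nf = enn2real (int_elog_neg M f)"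
    "pg = enn2real (int_elog_pos M g)" "ng = enn2real (int_elog_neg M g)"
    "i = enn2real (\<integral>\<^sup>+ x. f x * g x \<partial>M)"
  with assms(3-7) have reals: "int_elog_pos M f = ennreal pf" "int_elog_neg M f = ennreal nf"
      "int_elog_pos M g = ennreal pg" "int_elog_neg M g = ennreal ng"
      "(\<integral>\<^sup>+ x. f x * g x \<partial>M) = ennreal i" "0 \<le> pf" "0 \<le> nf" "0 \<le> pg" "0 \<le> ng" "0 \<le> i"
    by (simp_all add: less_top)
  define a where "a = pf - nf + (pg - ng)" \<comment> \<open>the logarithm of the left-hand side\<close>
  have "int_elog_pos M f + int_elog_pos M g + ennreal (1 - a)
      = (\<integral>\<^sup>+ x. elog_pos (f x) + elog_pos (g x) + ennreal (1 - a) \<partial>M)"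
    using f g by (simp add: int_elog_pos_def nn_integral_add emeasure_space_1)
  also have "\<dots> \<le> (\<integral>\<^sup>+ x. elog_neg (f x) + elog_neg (g x) + f x * g x * ennreal (exp (- a))
      + ennreal (a - 1) \<partial>M)"
    by (intro nn_integral_mono elog_parts_young)
  also have "\<dots> = int_elog_neg M f + int_elog_neg M g + (\<integral>\<^sup>+ x. f x * g x \<partial>M) * ennreal (exp (- a))
      + ennreal (a - 1)"
    using f g by (simp add: int_elog_neg_def nn_integral_add nn_integral_multc emeasure_space_1)
  finally have "pf + pg + max 0 (1 - a) \<le> nf + ng + i * exp (- a) + max 0 (a - 1)"
    using reals by (simp add: ennreal_mult[symmetric] ennreal_plus_max_0
        del: ennreal_max_0 ennreal_plus)
  then have "1 \<le> i * exp (- a)"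
    unfolding max_def a_def by (auto split: if_splits)
  then have "exp a \<le> i"
    by (simp add: exp_minus field_simps)
  moreover have "norm_0p M f * norm_0m M g = ennreal (exp a)"
    using reals by (simp add: norm_0p_eq norm_0m_eq a_def exp_add ennreal_mult)
  ultimately show ?thesis
    using reals by (simp add: ennreal_leI)
qed

lemma norm_0p_mult_norm_0m_le:
  assumes f: "f \<in> borel_measurable M" and g: "g \<in> borel_measurable M"
  shows "norm_0p M f * norm_0m M g \<le> (\<integral>\<^sup>+ x. f x * g x \<partial>M)"
proof (cases "norm_0p M f = 0 \<or> norm_0m M g = 0 \<or> (\<integral>\<^sup>+ x. f x * g x \<partial>M) = \<top>")
  case False
  then have I: "(\<integral>\<^sup>+ x. f x * g x \<partial>M) \<noteq> \<top>" and Ng: "int_elog_neg M g \<noteq> \<top>"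
    by (auto simp: norm_0m_eq)
  then have Pf: "int_elog_pos M f \<noteq> \<top>"
    using int_elog_pos_le_nn_integral_mult[OF f g] by (auto simp: top_unique)
  with False have Nf: "int_elog_neg M f \<noteq> \<top>"
    by (auto simp: norm_0p_eq)
  then have Pg: "int_elog_pos M g \<noteq> \<top>"
    using I int_elog_pos_le_nn_integral_mult[OF g f] by (auto simp: top_unique mult.commute)
  from norm_0p_mult_norm_0m_le_finite[OF f g Pf Nf Pg Ng I] show ?thesis .
qed auto

lemma nn_integral_mult_mult_inverse_le: "(\<integral>\<^sup>+ x. f x * (ennreal c * (1 / f x)) \<partial>M) \<le> ennreal c"
proof -
  have "(\<integral>\<^sup>+ x. f x * (ennreal c * (1 / f x)) \<partial>M) \<le> (\<integral>\<^sup>+ x. ennreal c \<partial>M)"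
    by (intro nn_integral_mono mult_mult_inverse_le)
  then show ?thesis
    by (simp add: emeasure_space_1)
qed

lemma norm_0p_eq_INF:
  assumes f: "f \<in> borel_measurable M"
  shows "norm_0p M f = (INF g\<in>{g\<in>borel_measurable M. norm_0m M g \<ge> 1}. \<integral>\<^sup>+ x. f x * g x \<partial>M)"
proof (rule ennreal_INF_eqI)
  fix g assume g: "g \<in> {g\<in>borel_measurable M. norm_0m M g \<ge> 1}"
  have "norm_0p M f = norm_0p M f * 1"
    by simp
  also have "\<dots> \<le> norm_0p M f * norm_0m M g"
    using g by (intro mult_left_mono) auto
  also have "\<dots> \<le> (\<integral>\<^sup>+ x. f x * g x \<partial>M)"
    using f g by (intro norm_0p_mult_norm_0m_le) auto
  finally show "norm_0p M f \<le> (\<integral>\<^sup>+ x. f x * g x \<partial>M)" .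
next
  fix c assume c: "norm_0p M f < ennreal c"
  then have "0 < c"
    using ennreal_less_zero_iff le_less_trans zero_le by blast
  let ?g = "\<lambda>x. ennreal c * (1 / f x)"
  have "norm_0m M ?g = ennreal c * (1 / norm_0p M f)"
    using f \<open>0 < c\<close> by (simp add: norm_0m_mult norm_0m_inverse)
  then have "1 \<le> norm_0m M ?g"
    using c \<open>0 < c\<close> by (simp add: one_le_mult_inverse)
  with f show "\<exists>g\<in>{g\<in>borel_measurable M. norm_0m M g \<ge> 1}. (\<integral>\<^sup>+ x. f x * g x \<partial>M) \<le> ennreal c"
    by (intro bexI[of _ ?g] nn_integral_mult_mult_inverse_le) auto
qed

lemma norm_0m_eq_INF:
  assumes f: "f \<in> borel_measurable M"
  shows "norm_0m M f = (INF g\<in>{g\<in>borel_measurable M. norm_0p M g \<ge> 1}. \<integral>\<^sup>+ x. f x * g x \<partial>M)"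
proof (rule ennreal_INF_eqI)
  fix g assume g: "g \<in> {g\<in>borel_measurable M. norm_0p M g \<ge> 1}"
  have "norm_0m M f = 1 * norm_0m M f"
    by simp
  also have "\<dots> \<le> norm_0p M g * norm_0m M f"
    using g by (intro mult_right_mono) auto
  also have "\<dots> \<le> (\<integral>\<^sup>+ x. g x * f x \<partial>M)"
    using f g by (intro norm_0p_mult_norm_0m_le) auto
  finally show "norm_0m M f \<le> (\<integral>\<^sup>+ x. f x * g x \<partial>M)"
    by (simp add: mult.commute)
next
  fix c assume c: "norm_0m M f < ennreal c"
  then have "0 < c"
    using ennreal_less_zero_iff le_less_trans zero_le by blast
  let ?g = "\<lambda>x. ennreal c * (1 / f x)"
  have "norm_0p M ?g = ennreal c * (1 / norm_0m M f)"
    using f \<open>0 < c\<close> by (simp add: norm_0p_mult norm_0p_inverse)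
  then have "1 \<le> norm_0p M ?g"
    using c \<open>0 < c\<close> by (simp add: one_le_mult_inverse)
  with f show "\<exists>g\<in>{g\<in>borel_measurable M. norm_0p M g \<ge> 1}. (\<integral>\<^sup>+ x. f x * g x \<partial>M) \<le> ennreal c"
    by (intro bexI[of _ ?g] nn_integral_mult_mult_inverse_le) auto
qed

lemma norm_0p_one: "norm_0p M (\<lambda>x. 1) = 1"
  and norm_0m_one: "norm_0m M (\<lambda>x. 1) = 1"
  by (simp_all add: norm_0p_eq norm_0m_eq int_elog_pos_def int_elog_neg_def)

end

theorem mainTheorem19:
  fixes M :: "'a measure"
  assumes "prob_space M"
  shows "hyperbolic_norm_L M (norm_0p M) \<and> hyperbolic_norm_L M (norm_0m M)
    \<and> (\<forall>f\<in>borel_measurable M. \<forall>g\<in>borel_measurable M.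
          (\<integral>\<^sup>+ x. f x * g x \<partial>M) \<ge> norm_0p M f * norm_0m M g)
    \<and> (\<forall>f\<in>borel_measurable M.
          norm_0p M f = (INF g\<in>{g\<in>borel_measurable M. norm_0m M g \<ge> 1}. \<integral>\<^sup>+ x. f x * g x \<partial>M))
    \<and> (\<forall>f\<in>borel_measurable M.
          norm_0m M f = (INF g\<in>{g\<in>borel_measurable M. norm_0p M g \<ge> 1}. \<integral>\<^sup>+ x. f x * g x \<partial>M))
    \<and> (\<forall>f\<in>borel_measurable M. norm_0p M f = 1 / norm_0m M (\<lambda>x. 1 / f x))
    \<and> (\<forall>f\<in>borel_measurable M. norm_0m M f = 1 / norm_0p M (\<lambda>x. 1 / f x))"
proof -
  interpret prob_space M
    by fact
  have "hyperbolic_norm_L M (norm_0p M)"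
    by (rule hyperbolic_norm_L_INF[OF norm_0p_eq_INF]) (auto intro!: exI[of _ "\<lambda>x. 1"] simp: norm_0m_one)
  moreover have "hyperbolic_norm_L M (norm_0m M)"
    by (rule hyperbolic_norm_L_INF[OF norm_0m_eq_INF]) (auto intro!: exI[of _ "\<lambda>x. 1"] simp: norm_0p_one)
  moreover have "norm_0p M f = 1 / norm_0m M (\<lambda>x. 1 / f x)"
    and "norm_0m M f = 1 / norm_0p M (\<lambda>x. 1 / f x)" for f
    by (simp_all add: norm_0p_inverse norm_0m_inverse)
  ultimately show ?thesis
    using norm_0p_mult_norm_0m_le norm_0p_eq_INF norm_0m_eq_INF by blast
qed

end
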